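(* The map $$\mathcal S: L^2([0,1])\times\big(Z\cap\mathscr S(\mathbb R)\big)\to Y,\qquad (f,\phi)\mapsto \sum_{k\in\mathbb Z}\hat f(k)\,\big(\mathcal S_\phi e^{2\pi i k\cdot}\big)(b,\xi),$$ where $f=\sum_{k}\hat f(k)e^{2\pi i k t}$ and $(\mathcal S_\phi e^{2\pi i k\cdot})(b,\xi)=e^{2\pi i b(k-\xi)}\,\overline{\hat\phi\big(\tfrac{k-\xi}{\xi}\big)}$ for $b\in\mathbb R$, $\xi\neq 0$, is well defined and continuous (with respect to the $L^2([0,1])$ norm, the norm $\|\cdot\|_Z$ and the norm $\|\cdot\|_Y$).
   Context: The Fourier transform on $\mathbb R$ is $\hat\phi(\xi)=(2\pi)^{-1/2}\int_{\mathbb R}e^{-2\pi i t\xi}\phi(t)\,dt$ (extended to tempered distributions), and for $f\in L^2([0,1])$ (1-periodic), $\hat f(k)=\int_0^1 f(t)e^{-2\pi i k t}dt$. $Z$ is the Hilbert space of admissible windows: $Z=\{\phi\in\mathscr S'(\mathbb R): \int_{\mathbb R}|\hat\phi(\xi)|^2\frac{d\xi}{|1+\xi|}<\infty\}$ with inner product $(\phi,\phi')_Z=\int\hat\phi(\xi)\overline{\hat{\phi'}(\xi)}\frac{d\xi}{|1+\xi|}$. $Y$ is the Hilbert space of functions $g(b,\xi)=\sum_{k\in\mathbb Z}c_k(\xi)e^{2\pi i(k-\xi)b}$ with $c_k\in L^2(\mathbb R,\frac{d\xi}{|\xi|})$ and $\sum_k\|c_k\|^2_{L^2(\mathbb R,d\xi/|\xi|)}<\infty$,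 with inner product $(g,g')_Y=\int_0^1\int_{\mathbb R}g(b,\xi)\overline{g'(b,\xi)}\frac{d\xi}{|\xi|}\,db$ and norm $\|g\|_Y=(\sum_k\|c_k\|^2_{L^2(\mathbb R,d\xi/|\xi|)})^{1/2}$. *)

theory Defs
  imports "HOL-Analysis.Analysis"
begin

definition fourier_coeff :: "(real \<Rightarrow> complex) \<Rightarrow> int \<Rightarrow> complex" where
  "fourier_coeff f k = set_lebesgue_integral lborel {0..1} (\<lambda>t. f t * cis (- 2 * pi * real_of_int k * t))"

definition FT :: "(real \<Rightarrow> complex) \<Rightarrow> real \<Rightarrow> complex" where
  "FT \<phi> \<xi> = (integral\<^sup>L lborel (\<lambda>t. cis (- 2 * pi * t * \<xi>) * \<phi> t)) / complex_of_real (sqrt (2 * pi))"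

definition schwartz :: "(real \<Rightarrow> complex) \<Rightarrow> bool" where
  "schwartz \<phi> \<longleftrightarrow> (\<exists>D :: nat \<Rightarrow> real \<Rightarrow> complex. D 0 = \<phi> \<and>
      (\<forall>n x. (D n has_vector_derivative D (Suc n) x) (at x)) \<and>
      (\<forall>m n. \<exists>C. \<forall>x. \<bar>x\<bar> ^ m * cmod (D n x) \<le> C))"

definition L2_01 :: "(real \<Rightarrow> complex) \<Rightarrow> bool" where
  "L2_01 f \<longleftrightarrow> f \<in> borel_measurable lborel \<and>
     (\<integral>\<^sup>+ t\<in>{0..1}. ennreal ((cmod (f t))\<^sup>2) \<partial>lborel) < \<infinity>"

definition L2_dist :: "(real \<Rightarrow> complex) \<Rightarrow> (real \<Rightarrow> complex) \<Rightarrow> real" where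
  "L2_dist f g = sqrt (enn2real (\<integral>\<^sup>+ t\<in>{0..1}. ennreal ((cmod (f t - g t))\<^sup>2) \<partial>lborel))"

text \<open>The window space Z (restricted to Schwartz functions, where the
  Fourier transform is a genuine function).\<close>
definition Z_sq :: "(real \<Rightarrow> complex) \<Rightarrow> ennreal" where
  "Z_sq \<phi> = (\<integral>\<^sup>+ \<xi>. ennreal ((cmod (FT \<phi> \<xi>))\<^sup>2 / \<bar>1 + \<xi>\<bar>) \<partial>lborel)"

definition in_Z :: "(real \<Rightarrow> complex) \<Rightarrow> bool" where
  "in_Z \<phi> \<longleftrightarrow> Z_sq \<phi> < \<infinity>"

definition Z_dist :: "(real \<Rightarrow> complex) \<Rightarrow> (real \<Rightarrow> complex) \<Rightarrow> real" where
  "Z_dist \<phi> \<psi> = sqrt (enn2real (\<integral>\<^sup>+ \<xi>. ennreal ((cmod (FT \<phi> \<xi> - FT \<psi> \<xi>))\<^sup>2 / \<bar>1 + \<xi>\<bar>) \<partial>lborel))"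

text \<open>Elements of Y, g(b,\<xi>) = sum_k c_k(\<xi>) e^{2\<pi>i(k-\<xi>)b}, are represented by their
  coefficient families c :: int => real => complex; the Y-norm is
  (sum_k ||c_k||^2_{L^2(d\<xi>/|\<xi>|)})^{1/2}.\<close>
definition Y_sq :: "(int \<Rightarrow> real \<Rightarrow> complex) \<Rightarrow> ennreal" where
  "Y_sq c = (\<Sum>\<^sub>\<infinity> k\<in>UNIV. (\<integral>\<^sup>+ \<xi>. ennreal ((cmod (c k \<xi>))\<^sup>2 / \<bar>\<xi>\<bar>) \<partial>lborel))"

definition in_Y :: "(int \<Rightarrow> real \<Rightarrow> complex) \<Rightarrow> bool" where
  "in_Y c \<longleftrightarrow> (\<forall>k. c k \<in> borel_measurable lborel) \<and> Y_sq c < \<infinity>"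

definition Y_dist :: "(int \<Rightarrow> real \<Rightarrow> complex) \<Rightarrow> (int \<Rightarrow> real \<Rightarrow> complex) \<Rightarrow> real" where
  "Y_dist c d = sqrt (enn2real (Y_sq (\<lambda>k \<xi>. c k \<xi> - d k \<xi>)))"

text \<open>The Y-element that the map S assigns to (f,\<phi>): its k-th coefficient is
  fhat(k) * conj(phihat((k-\<xi>)/\<xi>)), i.e.
  S(f,\<phi>)(b,\<xi>) = sum_k fhat(k) e^{2\<pi>ib(k-\<xi>)} conj(phihat((k-\<xi>)/\<xi>)).\<close>
definition S_coeffs :: "(real \<Rightarrow> complex) \<Rightarrow> (real \<Rightarrow> complex) \<Rightarrow> int \<Rightarrow> real \<Rightarrow> complex" where
  "S_coeffs f \<phi> k \<xi> = fourier_coeff f k * cnj (FT \<phi> ((real_of_int k - \<xi>) / \<xi>))"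

end

theory Submission
  imports Defs "HOL-Probability.Sinc_Integral"
begin

text \<open>For \<open>k \<noteq> 0\<close> the substitution \<open>u = (k - \<xi>) / \<xi>\<close> carries \<open>d\<xi> / \<bar>\<xi>\<bar>\<close> to
  \<open>du / \<bar>1 + u\<bar>\<close>, so the \<open>k\<close>-th coefficient of \<open>S(f,\<phi>)\<close> has squared norm
  \<open>\<bar>fourier_coeff f k\<bar>\<^sup>2 \<parallel>\<phi>\<parallel>\<^sub>Z\<^sup>2\<close>. For \<open>k = 0\<close> the coefficient is a multiple of
  \<open>cnj (FT \<phi> (-1))\<close>, which vanishes: the weight \<open>1 / \<bar>1 + \<xi>\<bar>\<close> is not integrable at \<open>-1\<close>,
  so the continuous function \<open>FT \<phi>\<close> must vanish there. Summing over \<open>k\<close> with Bessel's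
  inequality gives \<open>\<parallel>S(f,\<phi>)\<parallel>\<^sub>Y \<le> \<parallel>f\<parallel>\<^sub>2 \<parallel>\<phi>\<parallel>\<^sub>Z\<close>, and continuity follows from bilinearity.\<close>

lemma norm_add_squared_le:
  fixes a b :: "'a::real_normed_vector"
  shows "(norm (a + b))\<^sup>2 \<le> 2 * (norm a)\<^sup>2 + 2 * (norm b)\<^sup>2"
proof -
  have "(norm (a + b))\<^sup>2 \<le> (norm a + norm b)\<^sup>2"
    by (simp add: norm_triangle_ineq power_mono)
  also have "\<dots> \<le> 2 * (norm a)\<^sup>2 + 2 * (norm b)\<^sup>2"
    using sum_squares_bound[of "norm a" "norm b"] by (simp add: power2_sum)
  finally show ?thesis .
qed

lemma ennreal_le_double_add:
  assumes "0 \<le> x" "0 \<le> y" "z \<le> 2 * x + 2 * y"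
  shows "ennreal z \<le> 2 * ennreal x + 2 * ennreal y"
proof -
  have "ennreal z \<le> ennreal (2 * x + 2 * y)" using assms(3) by (rule ennreal_leI)
  also have "\<dots> = 2 * ennreal x + 2 * ennreal y" using assms(1,2) by (simp add: ennreal_mult)
  finally show ?thesis .
qed

lemma infsum_ennreal_cmult: "(\<Sum>\<^sub>\<infinity>k\<in>A. c * f k) = (c::ennreal) * (\<Sum>\<^sub>\<infinity>k\<in>A. f k)"
  by (simp add: nonneg_infsum_complete sum_distrib_left SUP_mult_left_ennreal)

lemma nn_integral_weighted_norm_add_squared_le:
  fixes f g :: "'a \<Rightarrow> 'b::real_normed_vector"
  assumes [measurable]: "f \<in> borel_measurable M" "g \<in> borel_measurable M" "w \<in> borel_measurable M"
    and w: "\<And>x. 0 \<le> w x"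
  shows "(\<integral>\<^sup>+x. ennreal ((norm (f x + g x))\<^sup>2 / w x) \<partial>M)
    \<le> 2 * (\<integral>\<^sup>+x. ennreal ((norm (f x))\<^sup>2 / w x) \<partial>M) + 2 * (\<integral>\<^sup>+x. ennreal ((norm (g x))\<^sup>2 / w x) \<partial>M)"
proof -
  have "(\<integral>\<^sup>+x. ennreal ((norm (f x + g x))\<^sup>2 / w x) \<partial>M)
      \<le> (\<integral>\<^sup>+x. 2 * ennreal ((norm (f x))\<^sup>2 / w x) + 2 * ennreal ((norm (g x))\<^sup>2 / w x) \<partial>M)"
  proof (rule nn_integral_mono)
    fix x
    have "(norm (f x + g x))\<^sup>2 / w x \<le> 2 * ((norm (f x))\<^sup>2 / w x) + 2 * ((norm (g x))\<^sup>2 / w x)"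
      using divide_right_mono[OF norm_add_squared_le w] by (simp add: add_divide_distrib)
    then show "ennreal ((norm (f x + g x))\<^sup>2 / w x)
        \<le> 2 * ennreal ((norm (f x))\<^sup>2 / w x) + 2 * ennreal ((norm (g x))\<^sup>2 / w x)"
      using w by (intro ennreal_le_double_add) simp_all
  qed
  also have "\<dots> = 2 * (\<integral>\<^sup>+x. ennreal ((norm (f x))\<^sup>2 / w x) \<partial>M) + 2 * (\<integral>\<^sup>+x. ennreal ((norm (g x))\<^sup>2 / w x) \<partial>M)"
    by (simp add: nn_integral_add nn_integral_cmult)
  finally show ?thesis .
qed

section \<open>Change of variables for nonnegative integrals\<close>

lemma set_nn_integral_eq_ennreal_iff:
  fixes f :: "'a::euclidean_space \<Rightarrow> real"
  assumes [measurable]: "f \<in> borel_measurable borel" "A \<in> sets borel"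
    and nonneg: "\<And>x. x \<in> A \<Longrightarrow> 0 \<le> f x" and "0 \<le> r"
  shows "(\<integral>\<^sup>+x\<in>A. f x \<partial>lborel) = ennreal r \<longleftrightarrow> f absolutely_integrable_on A \<and> integral A f = r"
proof
  assume nn: "(\<integral>\<^sup>+x\<in>A. f x \<partial>lborel) = ennreal r"
  have "(\<integral>\<^sup>+x. ennreal (indicator A x * f x) \<partial>lborel) = (\<integral>\<^sup>+x\<in>A. f x \<partial>lborel)"
    by (intro nn_integral_cong) (simp add: indicator_def)
  then have "(\<integral>\<^sup>+x. ennreal (indicator A x * f x) \<partial>lborel) = ennreal r"
    using nn by simp
  then have "((\<lambda>x. indicator A x * f x) has_integral r) UNIV"
    using nonneg \<open>0 \<le> r\<close> by (intro nn_integral_has_integral) (auto simp: indicator_def)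
  then have "(f has_integral r) A"
    by (simp add: indicator_times_eq_if has_integral_restrict_UNIV)
  then show "f absolutely_integrable_on A \<and> integral A f = r"
    using nonneg by (auto intro: nonnegative_absolutely_integrable_1 simp: integral_unique has_integral_integrable)
next
  assume "f absolutely_integrable_on A \<and> integral A f = r"
  then have "(f has_integral r) A"
    using set_lebesgue_integral_eq_integral(1) by (metis integrable_integral)
  then show "(\<integral>\<^sup>+x\<in>A. f x \<partial>lborel) = ennreal r"
    using nonneg by (rule nn_integral_has_integral_lebesgue'[rotated])
qed

lemma nn_integral_change_of_variables_1:
  fixes f g g' :: "real \<Rightarrow> real"
  assumes [measurable]: "S \<in> sets borel" "g ` S \<in> sets borel"
      "f \<in> borel_measurable borel" "g \<in> borel_measurable borel" "g' \<in> borel_measurable borel"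
    and der: "\<And>x. x \<in> S \<Longrightarrow> (g has_real_derivative g' x) (at x within S)"
    and inj: "inj_on g S" and nonneg: "\<And>u. 0 \<le> f u"
  shows "(\<integral>\<^sup>+x\<in>S. \<bar>g' x\<bar> * f (g x) \<partial>lborel) = (\<integral>\<^sup>+u\<in>g ` S. f u \<partial>lborel)"
proof -
  let ?L = "\<integral>\<^sup>+x\<in>S. \<bar>g' x\<bar> * f (g x) \<partial>lborel" and ?R = "\<integral>\<^sup>+u\<in>g ` S. f u \<partial>lborel"
  have "(\<lambda>x. \<bar>g' x\<bar> * f (g x)) \<in> borel_measurable borel" by measurable
  then have iff: "?L = ennreal r \<longleftrightarrow> ?R = ennreal r" if "0 \<le> r" for r
    using that nonneg has_absolute_integral_change_of_variables_1'[OF _ der inj, of f r]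
      set_nn_integral_eq_ennreal_iff[of "\<lambda>x. \<bar>g' x\<bar> * f (g x)" S r]
      set_nn_integral_eq_ennreal_iff[of f "g ` S" r]
    by auto
  \<comment> \<open>the absolutely integrable version shows that both sides are finite together\<close>
  show ?thesis
  proof (cases "?L < \<infinity>")
    case True
    then show ?thesis using iff[of "enn2real ?L"] by (simp add: ennreal_enn2real)
  next
    case False
    then have "?L = \<infinity>" by (simp flip: top.not_eq_extremum)
    moreover have "?R = \<infinity>"
    proof (rule ccontr)
      assume "?R \<noteq> \<infinity>"
      then have "?L < \<infinity>" using iff[of "enn2real ?R"] by (simp add: ennreal_enn2real top.not_eq_extremum)
      with False show False by simp
    qed
    ultimately show ?thesis by simp
  qed
qed

lemma nn_integral_div_abs_substitution:
  fixes h :: "real \<Rightarrow> real"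
  assumes "k \<noteq> 0" and [measurable]: "h \<in> borel_measurable borel" and nonneg: "\<And>u. 0 \<le> h u"
  shows "(\<integral>\<^sup>+\<xi>. ennreal (h ((k - \<xi>) / \<xi>) / \<bar>\<xi>\<bar>) \<partial>lborel) = (\<integral>\<^sup>+u. ennreal (h u / \<bar>1 + u\<bar>) \<partial>lborel)"
proof -
  define g where "g \<xi> = k / \<xi> - 1" for \<xi> :: real
  define g' where "g' \<xi> = - k / \<xi>\<^sup>2" for \<xi> :: real
  have image: "g ` (- {0}) = - {-1}"
  proof (intro equalityI subsetI)
    fix u :: real assume "u \<in> - {-1}"
    then have "g (k / (1 + u)) = u" "k / (1 + u) \<in> - {0}"
      using \<open>k \<noteq> 0\<close> by (auto simp: g_def)
    then show "u \<in> g ` (- {0})" by (metis imageI)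
  qed (use \<open>k \<noteq> 0\<close> in \<open>auto simp: g_def\<close>)
  have change: "(\<integral>\<^sup>+x\<in>- {0}. \<bar>g' x\<bar> * (h (g x) / \<bar>1 + g x\<bar>) \<partial>lborel) =
        (\<integral>\<^sup>+u\<in>g ` (- {0}). h u / \<bar>1 + u\<bar> \<partial>lborel)"
  proof (rule nn_integral_change_of_variables_1)
    show "(g has_real_derivative g' x) (at x within - {0})" if "x \<in> - {0}" for x
      using that unfolding g_def g'_def
      by (auto intro!: derivative_eq_intros simp: power2_eq_square field_simps)
    show "inj_on g (- {0})" using \<open>k \<noteq> 0\<close> by (auto simp: inj_on_def g_def)
    show "- {0::real} \<in> sets borel" by (rule borel_open) (simp add: open_Compl)
    show "g ` (- {0}) \<in> sets borel" unfolding image by (rule borel_open) (simp add: open_Compl)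
    show "g \<in> borel_measurable borel" unfolding g_def[abs_def] by measurable
    show "g' \<in> borel_measurable borel" unfolding g'_def[abs_def] by measurable
    show "(\<lambda>u. h u / \<bar>1 + u\<bar>) \<in> borel_measurable borel" by measurable
    show "0 \<le> h u / \<bar>1 + u\<bar>" for u using nonneg by simp
  qed
  have pointwise: "\<bar>g' x\<bar> * (h (g x) / \<bar>1 + g x\<bar>) = h ((k - x) / x) / \<bar>x\<bar>" if "x \<noteq> 0" for x
  proof -
    have "\<bar>g' x\<bar> = \<bar>k\<bar> / \<bar>x\<bar>\<^sup>2" "\<bar>1 + g x\<bar> = \<bar>k\<bar> / \<bar>x\<bar>" "g x = (k - x) / x"
      using that by (simp_all add: g_def g'_def abs_divide diff_divide_distrib)
    then have "\<bar>g' x\<bar> * (h (g x) / \<bar>1 + g x\<bar>) = \<bar>k\<bar> / \<bar>x\<bar>\<^sup>2 * (h ((k - x) / x) / (\<bar>k\<bar> / \<bar>x\<bar>))"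
      by (simp only:)
    also have "\<dots> = h ((k - x) / x) / \<bar>x\<bar>"
      using that \<open>k \<noteq> 0\<close> by (simp add: field_simps power2_eq_square)
    finally show ?thesis .
  qed
  have "(\<integral>\<^sup>+\<xi>. ennreal (h ((k - \<xi>) / \<xi>) / \<bar>\<xi>\<bar>) \<partial>lborel)
      = (\<integral>\<^sup>+x\<in>- {0}. \<bar>g' x\<bar> * (h (g x) / \<bar>1 + g x\<bar>) \<partial>lborel)"
    by (intro nn_integral_cong) (simp add: pointwise indicator_def del: times_divide_eq_right)
  also have "\<dots> = (\<integral>\<^sup>+u. ennreal (h u / \<bar>1 + u\<bar>) \<partial>lborel)"
    unfolding change image by (intro nn_integral_cong) (simp add: indicator_def)
  finally show ?thesis .
qed

section \<open>A weight that is not integrable at a point\<close>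

lemma nn_integral_inverse_dist_diverges:
  fixes a r :: real
  assumes "0 < r"
  shows "(\<integral>\<^sup>+x\<in>{a<..a+r}. ennreal (1 / (x - a)) \<partial>lborel) = \<infinity>"
proof -
  have lower: "ennreal M \<le> (\<integral>\<^sup>+x\<in>{a<..a+r}. ennreal (1 / (x - a)) \<partial>lborel)" if "0 < M" for M
  proof -
    define e where "e = r * exp (- M)"
    have e: "0 < e" "e < r" using \<open>0 < r\<close> \<open>0 < M\<close> by (auto simp: e_def)
    have "((\<lambda>x. 1 / (x - a)) has_integral (ln r - ln e)) {a+e..a+r}"
    proof -
      have "((\<lambda>x. ln (x - a)) has_real_derivative 1 / (x - a)) (at x within {a+e..a+r})"
        if "x \<in> {a+e..a+r}" for x
        using that e by (auto intro!: derivative_eq_intros)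
      then show ?thesis
        using fundamental_theorem_of_calculus[of "a+e" "a+r" "\<lambda>x. ln (x - a)"] e
        by (simp add: has_real_derivative_iff_has_vector_derivative)
    qed
    moreover have "ln r - ln e = M" using \<open>0 < r\<close> by (simp add: e_def ln_mult)
    ultimately have "ennreal M = (\<integral>\<^sup>+x\<in>{a+e..a+r}. ennreal (1 / (x - a)) \<partial>lborel)"
      using e by (intro nn_integral_has_integral_lebesgue'[symmetric]) auto
    also have "\<dots> \<le> (\<integral>\<^sup>+x\<in>{a<..a+r}. ennreal (1 / (x - a)) \<partial>lborel)"
      using e by (intro nn_integral_mono) (auto simp: indicator_def)
    finally show ?thesis .
  qed
  show ?thesis
  proof (cases "\<integral>\<^sup>+x\<in>{a<..a+r}. ennreal (1 / (x - a)) \<partial>lborel" rule: ennreal_cases)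
    case (real c)
    with lower[of "c + 1"] show ?thesis by simp
  qed simp
qed

lemma continuous_vanishes_if_nn_integral_square_div_dist_finite:
  fixes F :: "real \<Rightarrow> 'b::real_normed_vector"
  assumes "isCont F a" and "(\<integral>\<^sup>+x. ennreal ((norm (F x))\<^sup>2 / \<bar>x - a\<bar>) \<partial>lborel) < \<infinity>"
  shows "F a = 0"
proof (rule ccontr)
  assume "F a \<noteq> 0"
  define c where "c = (norm (F a))\<^sup>2 / 2"
  have "0 < c" using \<open>F a \<noteq> 0\<close> by (simp add: c_def)
  have "isCont (\<lambda>x. (norm (F x))\<^sup>2) a" using assms(1) by (intro continuous_intros)
  then obtain r where "0 < r" and r: "\<And>x. \<bar>x - a\<bar> < r \<Longrightarrow> \<bar>(norm (F x))\<^sup>2 - (norm (F a))\<^sup>2\<bar> < c"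
    using \<open>0 < c\<close> unfolding continuous_at_eps_delta dist_real_def by blast
  have "\<infinity> = c * (\<integral>\<^sup>+x\<in>{a<..a+r/2}. ennreal (1 / (x - a)) \<partial>lborel)"
    using \<open>0 < c\<close> \<open>0 < r\<close> by (simp add: nn_integral_inverse_dist_diverges ennreal_mult_top)
  also have "\<dots> = (\<integral>\<^sup>+x\<in>{a<..a+r/2}. ennreal (c / (x - a)) \<partial>lborel)"
    using \<open>0 < c\<close> by (subst nn_integral_cmult[symmetric])
      (auto simp: ennreal_mult'[symmetric] mult.assoc[symmetric] intro!: nn_integral_cong)
  also have "\<dots> \<le> (\<integral>\<^sup>+x. ennreal ((norm (F x))\<^sup>2 / \<bar>x - a\<bar>) \<partial>lborel)"
  proof (intro nn_integral_mono)
    fix x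
    show "ennreal (c / (x - a)) * indicator {a<..a+r/2} x \<le> ennreal ((norm (F x))\<^sup>2 / \<bar>x - a\<bar>)"
    proof (cases "x \<in> {a<..a+r/2}")
      case True
      then have "\<bar>(norm (F x))\<^sup>2 - (norm (F a))\<^sup>2\<bar> < c" using \<open>0 < r\<close> by (intro r) auto
      moreover have "(norm (F a))\<^sup>2 = 2 * c" by (simp add: c_def)
      ultimately have "c \<le> (norm (F x))\<^sup>2" by (simp add: abs_less_iff)
      moreover have "0 < x - a" using True by simp
      ultimately have "c / (x - a) \<le> (norm (F x))\<^sup>2 / \<bar>x - a\<bar>"
        by (simp add: divide_right_mono)
      then show ?thesis using True by (simp add: ennreal_leI)
    qed simp
  qed
  finally show False using assms(2) by simp
qed

section \<open>Square-integrable functions and Bessel's inequality\<close>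

lemma borel_measurable_cnj [measurable (raw)]:
  "f \<in> borel_measurable M \<Longrightarrow> (\<lambda>x. cnj (f x)) \<in> borel_measurable M"
  by (rule measurable_compose[OF _ borel_measurable_continuous_onI[OF continuous_on_cnj[OF continuous_on_id]]])

definition square_integrable :: "'a measure \<Rightarrow> ('a \<Rightarrow> complex) \<Rightarrow> bool" where
  "square_integrable M f \<longleftrightarrow> f \<in> borel_measurable M \<and> integrable M (\<lambda>x. (cmod (f x))\<^sup>2)"

lemma square_integrable_diff:
  assumes "square_integrable M f" "square_integrable M g"
  shows "square_integrable M (\<lambda>x. f x - g x)"
proof -
  have [measurable]: "f \<in> borel_measurable M" "g \<in> borel_measurable M"
    using assms by (auto simp: square_integrable_def)
  have "integrable M (\<lambda>x. 2 * (cmod (f x))\<^sup>2 + 2 * (cmod (g x))\<^sup>2)"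
    using assms by (auto simp: square_integrable_def)
  then have "integrable M (\<lambda>x. (cmod (f x - g x))\<^sup>2)"
    by (rule Bochner_Integration.integrable_bound)
      (use norm_add_squared_le[of "f _" "- g _"] in auto)
  then show ?thesis by (simp add: square_integrable_def)
qed

lemma integral_norm_sq_le:
  assumes f: "square_integrable M f" and g: "square_integrable M g"
  shows "(LINT x|M. (cmod (g x))\<^sup>2) \<le> 2 * (LINT x|M. (cmod (f x))\<^sup>2) + 2 * (LINT x|M. (cmod (f x - g x))\<^sup>2)"
proof -
  have fg: "square_integrable M (\<lambda>x. f x - g x)" using f g by (rule square_integrable_diff)
  have "(cmod (g x))\<^sup>2 \<le> 2 * (cmod (f x))\<^sup>2 + 2 * (cmod (f x - g x))\<^sup>2" for x
    using norm_add_squared_le[of "f x" "g x - f x"] by (simp add: norm_minus_commute)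
  then have "(LINT x|M. (cmod (g x))\<^sup>2) \<le> (LINT x|M. 2 * (cmod (f x))\<^sup>2 + 2 * (cmod (f x - g x))\<^sup>2)"
    using f g fg unfolding square_integrable_def by (intro integral_mono) auto
  also have "\<dots> = 2 * (LINT x|M. (cmod (f x))\<^sup>2) + 2 * (LINT x|M. (cmod (f x - g x))\<^sup>2)"
    using f fg unfolding square_integrable_def by simp
  finally show ?thesis .
qed

lemma integrable_mult_cnj:
  assumes "square_integrable M f" "square_integrable M g"
  shows "integrable M (\<lambda>x. f x * cnj (g x))"
proof -
  have [measurable]: "f \<in> borel_measurable M" "g \<in> borel_measurable M"
    using assms by (auto simp: square_integrable_def)
  have "integrable M (\<lambda>x. (cmod (f x))\<^sup>2 + (cmod (g x))\<^sup>2)"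
    using assms by (auto simp: square_integrable_def)
  then show ?thesis
  proof (rule Bochner_Integration.integrable_bound)
    show "AE x in M. norm (f x * cnj (g x)) \<le> norm ((cmod (f x))\<^sup>2 + (cmod (g x))\<^sup>2)"
    proof (intro AE_I2)
      fix x
      have "2 * cmod (f x) * cmod (g x) \<le> (cmod (f x))\<^sup>2 + (cmod (g x))\<^sup>2"
        by (rule sum_squares_bound)
      moreover have "0 \<le> cmod (f x) * cmod (g x)" by simp
      ultimately show "norm (f x * cnj (g x)) \<le> norm ((cmod (f x))\<^sup>2 + (cmod (g x))\<^sup>2)"
        by (simp add: norm_mult, linarith)
    qed
  qed measurable
qed

lemma integral_mult_cnj_self: "(LINT x|M. f x * cnj (f x)) = of_real (LINT x|M. (cmod (f x))\<^sup>2)"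
proof -
  have "(\<lambda>x. f x * cnj (f x)) = (\<lambda>x. of_real ((cmod (f x))\<^sup>2))"
    by (simp only: complex_norm_square)
  then show ?thesis by (simp only: integral_complex_of_real)
qed

lemma integral_norm_diff_squared:
  assumes "integrable M (\<lambda>x. f x * cnj (f x))" "integrable M (\<lambda>x. f x * cnj (g x))"
    "integrable M (\<lambda>x. g x * cnj (g x))"
  shows "of_real (LINT x|M. (cmod (f x - g x))\<^sup>2) = of_real (LINT x|M. (cmod (f x))\<^sup>2)
    - (LINT x|M. f x * cnj (g x)) - cnj (LINT x|M. f x * cnj (g x)) + of_real (LINT x|M. (cmod (g x))\<^sup>2)"
proof -
  have "(\<lambda>x. (f x - g x) * cnj (f x - g x))
      = (\<lambda>x. f x * cnj (f x) - f x * cnj (g x) - cnj (f x * cnj (g x)) + g x * cnj (g x))"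
    by (simp add: algebra_simps)
  then have "(LINT x|M. (f x - g x) * cnj (f x - g x)) = (LINT x|M. f x * cnj (f x))
      - (LINT x|M. f x * cnj (g x)) - cnj (LINT x|M. f x * cnj (g x)) + (LINT x|M. g x * cnj (g x))"
    using assms by (simp del: complex_cnj_mult)
  then show ?thesis by (simp only: integral_mult_cnj_self)
qed

text \<open>Expand \<open>0 \<le> \<parallel>f - s\<parallel>\<^sup>2\<close>, where \<open>s\<close> is the orthogonal projection of \<open>f\<close> onto the span
  of the family.\<close>
lemma bessel_inequality:
  fixes e :: "'i \<Rightarrow> 'a \<Rightarrow> complex"
  assumes "finite F" and f: "square_integrable M f"
    and e: "\<And>k. k \<in> F \<Longrightarrow> square_integrable M (e k)"
    and orth: "\<And>j k. j \<in> F \<Longrightarrow> k \<in> F \<Longrightarrow> (LINT x|M. e j x * cnj (e k x)) = (if j = k then 1 else 0)"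
  shows "(\<Sum>k\<in>F. (cmod (LINT x|M. f x * cnj (e k x)))\<^sup>2) \<le> (LINT x|M. (cmod (f x))\<^sup>2)"
proof -
  define c where "c k = (LINT x|M. f x * cnj (e k x))" for k
  define P where "P = (\<Sum>k\<in>F. (cmod (c k))\<^sup>2)"
  define s where "s x = (\<Sum>k\<in>F. c k * e k x)" for x
  have int_fe: "integrable M (\<lambda>x. f x * cnj (e k x))" if "k \<in> F" for k
    by (intro integrable_mult_cnj f e that)
  have int_ee: "integrable M (\<lambda>x. e j x * cnj (e k x))" if "j \<in> F" "k \<in> F" for j k
    using e that by (intro integrable_mult_cnj)
  have fs: "(\<lambda>x. f x * cnj (s x)) = (\<lambda>x. \<Sum>k\<in>F. cnj (c k) * (f x * cnj (e k x)))"
    by (auto simp: s_def sum_distrib_left mult_ac)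
  have ss: "(\<lambda>x. s x * cnj (s x)) = (\<lambda>x. \<Sum>k\<in>F. \<Sum>j\<in>F. c j * cnj (c k) * (e j x * cnj (e k x)))"
    by (simp add: s_def sum_distrib_left sum_distrib_right mult_ac)
  have "(LINT x|M. f x * cnj (s x)) = of_real P"
    unfolding fs P_def using int_fe
    by (simp add: c_def[symmetric] mult.commute[of "cnj _"] flip: complex_norm_square)
  moreover have "of_real (LINT x|M. (cmod (s x))\<^sup>2) = (of_real P :: complex)"
  proof -
    have "of_real (LINT x|M. (cmod (s x))\<^sup>2)
        = (\<Sum>k\<in>F. \<Sum>j\<in>F. c j * cnj (c k) * (if j = k then 1 else 0))"
      unfolding integral_mult_cnj_self[symmetric] ss using int_ee by (simp add: orth)
    also have "\<dots> = of_real P"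
      using \<open>finite F\<close> by (simp add: if_distrib sum.delta' cong: if_cong)
        (simp only: P_def of_real_sum complex_norm_square)
    finally show ?thesis .
  qed
  moreover have "integrable M (\<lambda>x. f x * cnj (s x))" "integrable M (\<lambda>x. s x * cnj (s x))"
    unfolding fs ss using int_fe int_ee by simp_all
  ultimately have "of_real (LINT x|M. (cmod (f x - s x))\<^sup>2) = (of_real ((LINT x|M. (cmod (f x))\<^sup>2) - P) :: complex)"
    using integral_norm_diff_squared[OF integrable_mult_cnj[OF f f], of s] by simp
  then have "(LINT x|M. (cmod (f x - s x))\<^sup>2) = (LINT x|M. (cmod (f x))\<^sup>2) - P"
    using of_real_eq_iff by blast
  moreover have "0 \<le> (LINT x|M. (cmod (f x - s x))\<^sup>2)" by simp
  ultimately show ?thesis by (simp add: P_def c_def)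
qed

section \<open>Fourier coefficients on \<open>[0,1]\<close>\<close>

abbreviation lborel_01 :: "real measure" where
  "lborel_01 \<equiv> restrict_space lborel {0..1}"

lemma L2_01_imp_square_integrable:
  assumes "L2_01 f"
  shows "square_integrable lborel_01 f"
proof -
  have [measurable]: "f \<in> borel_measurable lborel" using assms by (simp add: L2_01_def)
  have "(\<integral>\<^sup>+t. ennreal (norm ((cmod (f t))\<^sup>2)) \<partial>lborel_01) < \<infinity>"
    using assms by (simp add: L2_01_def nn_integral_restrict_space)
  then show ?thesis
    unfolding square_integrable_def integrable_iff_bounded
    by (auto intro: measurable_restrict_space1)
qed

lemma set_nn_integral_01_eq_integral:
  assumes "square_integrable lborel_01 f"
  shows "(\<integral>\<^sup>+t\<in>{0..1}. ennreal ((cmod (f t))\<^sup>2) \<partial>lborel) = ennreal (LINT t|lborel_01. (cmod (f t))\<^sup>2)"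
  using assms unfolding square_integrable_def
  by (simp add: nn_integral_restrict_space[symmetric] nn_integral_eq_integral)

lemma L2_dist_eq_integral:
  assumes "L2_01 f" "L2_01 g"
  shows "L2_dist f g = sqrt (LINT t|lborel_01. (cmod (f t - g t))\<^sup>2)"
  using set_nn_integral_01_eq_integral[OF square_integrable_diff[OF L2_01_imp_square_integrable[OF assms(1)]
      L2_01_imp_square_integrable[OF assms(2)]]]
  by (simp add: L2_dist_def)

definition fourier_exp :: "int \<Rightarrow> real \<Rightarrow> complex" where
  "fourier_exp k t = cis (2 * pi * real_of_int k * t)"

lemma fourier_coeff_eq_integral:
  "fourier_coeff f k = (LINT t|lborel_01. f t * cnj (fourier_exp k t))"
  by (simp add: fourier_coeff_def set_lebesgue_integral_def integral_restrict_space fourier_exp_def cis_cnj)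

lemma square_integrable_fourier_exp: "square_integrable lborel_01 (fourier_exp k)"
proof -
  have "fourier_exp k \<in> borel_measurable borel"
    unfolding fourier_exp_def by (intro borel_measurable_continuous_onI continuous_intros)
  then show ?thesis
    by (simp add: square_integrable_def fourier_exp_def integrable_restrict_space measurable_restrict_space1)
qed

lemma integral_cis_2pi_int: "integral {0..1} (\<lambda>t. cis (2 * pi * real_of_int m * t)) = (if m = 0 then 1 else 0)"
proof (cases "m = 0")
  case False
  define a where "a = 2 * pi * real_of_int m"
  have "a \<noteq> 0" using False by (simp add: a_def)
  have "((\<lambda>t. cis (a * t)) has_vector_derivative \<i> * a * cis (a * t)) (at t)" for t
  proof -
    have "((\<lambda>t. cis (a * t)) has_derivative (\<lambda>h. (a * h) *\<^sub>R (\<i> * cis (a * t)))) (at t)"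
      by (intro derivative_eq_intros) auto
    then show ?thesis unfolding has_vector_derivative_def by (simp add: scaleR_conv_of_real algebra_simps)
  qed
  then have "((\<lambda>t. \<i> * a * cis (a * t)) has_integral (cis (a * 1) - cis (a * 0))) {0..1}"
    by (intro fundamental_theorem_of_calculus) (auto intro: has_vector_derivative_at_within)
  moreover have "cis (a * 1) = 1" unfolding a_def by (metis cis_multiple_2pi Ints_of_int mult.commute mult_1_right)
  ultimately have "((\<lambda>t. cis (a * t)) has_integral 0) {0..1}"
    using \<open>a \<noteq> 0\<close> by (simp add: has_integral_mult_right_iff)
  then show ?thesis using False by (simp add: a_def integral_unique mult.assoc)
qed simp

lemma orthonormal_fourier_exp:
  "(LINT t|lborel_01. fourier_exp j t * cnj (fourier_exp k t)) = (if j = k then 1 else 0)"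
proof -
  have prod: "fourier_exp j t * cnj (fourier_exp k t) = cis (2 * pi * real_of_int (j - k) * t)" for t
    by (simp add: fourier_exp_def cis_cnj cis_mult algebra_simps)
  have "set_integrable lborel {0..1} (\<lambda>t. cis (2 * pi * real_of_int (j - k) * t))"
    unfolding set_integrable_def by (intro borel_integrable_compact continuous_intros) auto
  then have "(LINT t|lborel_01. fourier_exp j t * cnj (fourier_exp k t)) = integral {0..1} (\<lambda>t. cis (2 * pi * real_of_int (j - k) * t))"
    by (simp add: prod integral_restrict_space set_borel_integral_eq_integral(2)[symmetric] set_lebesgue_integral_def)
  also have "\<dots> = (if j - k = 0 then 1 else 0)"
    by (rule integral_cis_2pi_int)
  finally show ?thesis by simp
qed

lemma fourier_coeff_diff:
  assumes "square_integrable lborel_01 f" "square_integrable lborel_01 g"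
  shows "fourier_coeff (\<lambda>t. f t - g t) k = fourier_coeff f k - fourier_coeff g k"
  using integrable_mult_cnj[OF _ square_integrable_fourier_exp] assms
  by (simp add: fourier_coeff_eq_integral left_diff_distrib)

lemma bessel_inequality_fourier:
  assumes "square_integrable lborel_01 f"
  shows "(\<Sum>\<^sub>\<infinity>k\<in>UNIV. ennreal ((cmod (fourier_coeff f k))\<^sup>2)) \<le> ennreal (LINT t|lborel_01. (cmod (f t))\<^sup>2)"
proof (rule infsum_le_finite_sums)
  show "(\<lambda>k. ennreal ((cmod (fourier_coeff f k))\<^sup>2)) summable_on UNIV"
    by (rule nonneg_summable_on_complete) simp
  fix F :: "int set" assume "finite F"
  then show "(\<Sum>k\<in>F. ennreal ((cmod (fourier_coeff f k))\<^sup>2)) \<le> ennreal (LINT t|lborel_01. (cmod (f t))\<^sup>2)"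
    using bessel_inequality[OF _ assms square_integrable_fourier_exp orthonormal_fourier_exp]
    by (simp add: fourier_coeff_eq_integral ennreal_leI)
qed

section \<open>Schwartz windows and the space \<open>Z\<close>\<close>

lemma schwartz_continuous:
  assumes "schwartz \<phi>"
  shows "continuous_on UNIV \<phi>"
proof -
  obtain D where "D 0 = \<phi>" and "\<And>n x. (D n has_vector_derivative D (Suc n) x) (at x)"
    using assms unfolding schwartz_def by blast
  then show ?thesis
    by (metis continuous_at_imp_continuous_on has_vector_derivative_continuous)
qed

lemma schwartz_integrable:
  assumes "schwartz \<phi>"
  shows "integrable lborel \<phi>"
proof -
  obtain D where "D 0 = \<phi>" and "\<forall>m n. \<exists>C. \<forall>x. \<bar>x\<bar> ^ m * cmod (D n x) \<le> C"
    using assms unfolding schwartz_def by auto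
  then obtain C0 C2 where C0: "\<And>x. cmod (\<phi> x) \<le> C0" and C2: "\<And>x. x\<^sup>2 * cmod (\<phi> x) \<le> C2"
    by (metis power2_abs power_0 mult_1)
  have "integrable lborel (\<lambda>x::real. (C0 + C2) * inverse (1 + x\<^sup>2))"
    using integrable_inverse_1_plus_square by (simp add: set_integrable_def)
  then show ?thesis
  proof (rule Bochner_Integration.integrable_bound)
    show "\<phi> \<in> borel_measurable lborel"
      using schwartz_continuous[OF assms] by (simp add: borel_measurable_continuous_onI)
    show "AE x in lborel. norm (\<phi> x) \<le> norm ((C0 + C2) * inverse (1 + x\<^sup>2))"
    proof (rule AE_I2)
      fix x :: real
      have "0 < 1 + x\<^sup>2" by (simp add: add_pos_nonneg)
      moreover have "(1 + x\<^sup>2) * cmod (\<phi> x) \<le> C0 + C2"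
        using C0[of x] C2[of x] by (simp add: algebra_simps)
      moreover have "0 \<le> C0" using C0[of x] norm_ge_zero order_trans by blast
      moreover have "0 \<le> C2" using C2[of x] by (meson mult_nonneg_nonneg norm_ge_zero order_trans zero_le_power2)
      ultimately show "norm (\<phi> x) \<le> norm ((C0 + C2) * inverse (1 + x\<^sup>2))"
        by (simp add: field_simps)
    qed
  qed
qed

lemma continuous_FT:
  assumes "integrable lborel \<phi>"
  shows "continuous_on UNIV (FT \<phi>)"
proof -
  have [measurable]: "\<phi> \<in> borel_measurable lborel" using assms by auto
  have [measurable]: "(\<lambda>t. cis (- 2 * pi * t * c)) \<in> borel_measurable borel" for c
    by (intro borel_measurable_continuous_onI continuous_intros)
  have "isCont (\<lambda>\<xi>. LINT t|lborel. cis (- 2 * pi * t * \<xi>) * \<phi> t) \<xi>\<^sub>0" for \<xi>\<^sub>0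
    unfolding continuous_at_sequentially comp_def
  proof (intro allI impI)
    fix X :: "nat \<Rightarrow> real" assume "X \<longlonglongrightarrow> \<xi>\<^sub>0"
    show "(\<lambda>n. LINT t|lborel. cis (- 2 * pi * t * X n) * \<phi> t) \<longlonglongrightarrow>
          (LINT t|lborel. cis (- 2 * pi * t * \<xi>\<^sub>0) * \<phi> t)"
    proof (rule integral_dominated_convergence[where w = "\<lambda>t. norm (\<phi> t)"])
      show "(\<lambda>t. cis (- 2 * pi * t * \<xi>\<^sub>0) * \<phi> t) \<in> borel_measurable lborel"
        by measurable
      show "(\<lambda>t. cis (- 2 * pi * t * X n) * \<phi> t) \<in> borel_measurable lborel" for n
        by measurable
      show "integrable lborel (\<lambda>t. norm (\<phi> t))" using assms by auto
      show "AE t in lborel. (\<lambda>n. cis (- 2 * pi * t * X n) * \<phi> t) \<longlonglongrightarrow> cis (- 2 * pi * t * \<xi>\<^sub>0) * \<phi> t"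
        using \<open>X \<longlonglongrightarrow> \<xi>\<^sub>0\<close> by (intro AE_I2 tendsto_intros)
      show "AE t in lborel. norm (cis (- 2 * pi * t * X n) * \<phi> t) \<le> norm (\<phi> t)" for n
        by (simp add: norm_mult)
    qed
  qed
  then show ?thesis unfolding FT_def
    by (intro continuous_at_imp_continuous_on ballI continuous_intros) auto
qed

lemma borel_measurable_FT_schwartz:
  assumes "schwartz \<phi>"
  shows "FT \<phi> \<in> borel_measurable borel"
  using continuous_FT[OF schwartz_integrable[OF assms]] by (rule borel_measurable_continuous_onI)

lemma FT_minus_one_eq_0:
  assumes "schwartz \<phi>" "in_Z \<phi>"
  shows "FT \<phi> (-1) = 0"
proof (rule continuous_vanishes_if_nn_integral_square_div_dist_finite)
  show "isCont (FT \<phi>) (-1)"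
    using continuous_FT[OF schwartz_integrable[OF assms(1)]] by (simp add: continuous_on_eq_continuous_at)
  show "(\<integral>\<^sup>+x. ennreal ((norm (FT \<phi> x))\<^sup>2 / \<bar>x - -1\<bar>) \<partial>lborel) < \<infinity>"
    using assms(2) by (simp add: in_Z_def Z_sq_def add.commute)
qed

definition Z_weighted_sq :: "(real \<Rightarrow> complex) \<Rightarrow> ennreal" where
  "Z_weighted_sq F = (\<integral>\<^sup>+u. ennreal ((cmod (F u))\<^sup>2 / \<bar>1 + u\<bar>) \<partial>lborel)"

lemma Z_sq_eq: "Z_sq \<phi> = Z_weighted_sq (FT \<phi>)"
  by (simp add: Z_sq_def Z_weighted_sq_def)

lemma Z_dist_eq: "Z_dist \<phi> \<psi> = sqrt (enn2real (Z_weighted_sq (\<lambda>u. FT \<phi> u - FT \<psi> u)))"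
  by (simp add: Z_dist_def Z_weighted_sq_def)

lemma Z_weighted_sq_FT_diff:
  assumes "schwartz \<phi>" "in_Z \<phi>" "schwartz \<psi>" "in_Z \<psi>"
  shows "Z_weighted_sq (\<lambda>u. FT \<phi> u - FT \<psi> u) = ennreal ((Z_dist \<phi> \<psi>)\<^sup>2)"
proof -
  have [measurable]: "FT \<phi> \<in> borel_measurable borel" "FT \<psi> \<in> borel_measurable borel"
    using assms by (simp_all add: borel_measurable_FT_schwartz)
  have "Z_weighted_sq (\<lambda>u. FT \<phi> u - FT \<psi> u) \<le> 2 * Z_weighted_sq (FT \<phi>) + 2 * Z_weighted_sq (\<lambda>u. - FT \<psi> u)"
    unfolding Z_weighted_sq_def
    using nn_integral_weighted_norm_add_squared_le[of "FT \<phi>" lborel "\<lambda>u. - FT \<psi> u" "\<lambda>u. \<bar>1 + u\<bar>"]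
    by simp
  also have "\<dots> < \<infinity>"
    using assms by (simp add: in_Z_def Z_sq_eq Z_weighted_sq_def ennreal_mult_less_top)
  finally show ?thesis by (simp add: Z_dist_eq)
qed

section \<open>The map \<open>S\<close>\<close>

lemma nn_integral_Y_term_le:
  fixes F :: "real \<Rightarrow> complex" and k :: int
  assumes [measurable]: "F \<in> borel_measurable borel" and "F (-1) = 0"
  shows "(\<integral>\<^sup>+\<xi>. ennreal ((cmod (a * cnj (F ((k - \<xi>) / \<xi>))))\<^sup>2 / \<bar>\<xi>\<bar>) \<partial>lborel)
    \<le> ennreal ((cmod a)\<^sup>2) * Z_weighted_sq F"
proof (cases "k = 0")
  case True
  \<comment> \<open>then \<open>(k - \<xi>) / \<xi> = -1\<close> for all \<open>\<xi> \<noteq> 0\<close>\<close>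
  then have zero: "(cmod (a * cnj (F ((k - \<xi>) / \<xi>))))\<^sup>2 / \<bar>\<xi>\<bar> = 0" for \<xi> :: real
    using \<open>F (-1) = 0\<close> by (cases "\<xi> = 0") auto
  have "(\<integral>\<^sup>+\<xi>. ennreal ((cmod (a * cnj (F ((k - \<xi>) / \<xi>))))\<^sup>2 / \<bar>\<xi>\<bar>) \<partial>lborel) = 0"
    by (simp only: zero ennreal_0 nn_integral_0_iff_AE) simp
  then show ?thesis by simp
next
  case False
  have "(\<integral>\<^sup>+\<xi>. ennreal ((cmod (a * cnj (F ((k - \<xi>) / \<xi>))))\<^sup>2 / \<bar>\<xi>\<bar>) \<partial>lborel)
      = (\<integral>\<^sup>+\<xi>. ennreal ((cmod a)\<^sup>2) * ennreal ((cmod (F ((k - \<xi>) / \<xi>)))\<^sup>2 / \<bar>\<xi>\<bar>) \<partial>lborel)"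
    by (intro nn_integral_cong) (simp add: norm_mult power_mult_distrib ennreal_mult[symmetric])
  also have "\<dots> = ennreal ((cmod a)\<^sup>2) * Z_weighted_sq F"
    using False
    by (simp add: nn_integral_cmult nn_integral_div_abs_substitution[where h = "\<lambda>u. (cmod (F u))\<^sup>2"]
        Z_weighted_sq_def)
  finally show ?thesis by simp
qed

lemma Y_sq_le:
  fixes F :: "real \<Rightarrow> complex" and a :: "int \<Rightarrow> complex"
  assumes "F \<in> borel_measurable borel" "F (-1) = 0"
  shows "Y_sq (\<lambda>k \<xi>. a k * cnj (F ((k - \<xi>) / \<xi>)))
    \<le> Z_weighted_sq F * (\<Sum>\<^sub>\<infinity>k\<in>UNIV. ennreal ((cmod (a k))\<^sup>2))"
proof -
  have "Y_sq (\<lambda>k \<xi>. a k * cnj (F ((k - \<xi>) / \<xi>)))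
      \<le> (\<Sum>\<^sub>\<infinity>k\<in>UNIV. Z_weighted_sq F * ennreal ((cmod (a k))\<^sup>2))"
    unfolding Y_sq_def using nn_integral_Y_term_le[OF assms]
    by (intro infsum_mono) (auto intro: nonneg_summable_on_complete simp: mult.commute)
  then show ?thesis by (simp add: infsum_ennreal_cmult)
qed

lemma Y_sq_add_le:
  assumes "\<And>k. c k \<in> borel_measurable lborel" "\<And>k. d k \<in> borel_measurable lborel"
  shows "Y_sq (\<lambda>k \<xi>. c k \<xi> + d k \<xi>) \<le> 2 * Y_sq c + 2 * Y_sq d"
proof -
  have "Y_sq (\<lambda>k \<xi>. c k \<xi> + d k \<xi>)
      \<le> (\<Sum>\<^sub>\<infinity>k\<in>UNIV. 2 * (\<integral>\<^sup>+\<xi>. ennreal ((cmod (c k \<xi>))\<^sup>2 / \<bar>\<xi>\<bar>) \<partial>lborel)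
                     + 2 * (\<integral>\<^sup>+\<xi>. ennreal ((cmod (d k \<xi>))\<^sup>2 / \<bar>\<xi>\<bar>) \<partial>lborel))"
    unfolding Y_sq_def using assms
    by (intro infsum_mono nn_integral_weighted_norm_add_squared_le) (auto intro: nonneg_summable_on_complete)
  also have "\<dots> = 2 * Y_sq c + 2 * Y_sq d"
    unfolding Y_sq_def
    by (simp add: infsum_add nonneg_summable_on_complete infsum_ennreal_cmult)
  finally show ?thesis .
qed

lemma Y_sq_fourier_le:
  fixes F :: "real \<Rightarrow> complex"
  assumes "square_integrable lborel_01 f" "F \<in> borel_measurable borel" "F (-1) = 0"
  shows "Y_sq (\<lambda>k \<xi>. fourier_coeff f k * cnj (F ((k - \<xi>) / \<xi>)))
    \<le> Z_weighted_sq F * ennreal (LINT t|lborel_01. (cmod (f t))\<^sup>2)"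
  using Y_sq_le[OF assms(2,3)] bessel_inequality_fourier[OF assms(1)]
  by (meson mult_left_mono order_trans zero_le)

lemma S_coeffs_measurable:
  assumes "schwartz \<phi>"
  shows "S_coeffs f \<phi> k \<in> borel_measurable lborel"
  using borel_measurable_FT_schwartz[OF assms] unfolding S_coeffs_def by measurable

lemma S_coeffs_in_Y:
  assumes "L2_01 f" "schwartz \<phi>" "in_Z \<phi>"
  shows "in_Y (S_coeffs f \<phi>)"
proof -
  have "Y_sq (S_coeffs f \<phi>) \<le> Z_sq \<phi> * ennreal (LINT t|lborel_01. (cmod (f t))\<^sup>2)"
    unfolding S_coeffs_def[abs_def] Z_sq_eq
    using L2_01_imp_square_integrable[OF assms(1)] borel_measurable_FT_schwartz[OF assms(2)]
      FT_minus_one_eq_0[OF assms(2,3)]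
    by (rule Y_sq_fourier_le)
  also have "\<dots> < \<infinity>" using assms(3) by (simp add: in_Z_def ennreal_mult_less_top)
  finally show ?thesis
    using S_coeffs_measurable[OF assms(2)] by (simp add: in_Y_def)
qed

text \<open>\<open>S(f,\<phi>) - S(g,\<psi>) = S(f - g, \<phi>) + S(g, \<phi> - \<psi>)\<close>, bilinearity at the level of coefficients.\<close>
lemma Y_dist_S_coeffs_le:
  assumes f: "L2_01 f" and g: "L2_01 g"
    and \<phi>: "schwartz \<phi>" "in_Z \<phi>" and \<psi>: "schwartz \<psi>" "in_Z \<psi>"
  shows "(Y_dist (S_coeffs f \<phi>) (S_coeffs g \<psi>))\<^sup>2
    \<le> 2 * enn2real (Z_sq \<phi>) * (L2_dist f g)\<^sup>2 + 2 * (Z_dist \<phi> \<psi>)\<^sup>2 * (LINT t|lborel_01. (cmod (g t))\<^sup>2)"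
proof -
  have f2: "square_integrable lborel_01 f" and g2: "square_integrable lborel_01 g"
    using f g by (simp_all add: L2_01_imp_square_integrable)
  note [measurable] = borel_measurable_FT_schwartz[OF \<phi>(1)] borel_measurable_FT_schwartz[OF \<psi>(1)]
  define D where "D = (\<lambda>u. FT \<phi> u - FT \<psi> u)"
  have [measurable]: "D \<in> borel_measurable borel" unfolding D_def by measurable
  define A where "A k \<xi> = fourier_coeff (\<lambda>t. f t - g t) k * cnj (FT \<phi> ((real_of_int k - \<xi>) / \<xi>))" for k \<xi>
  define B where "B k \<xi> = fourier_coeff g k * cnj (D ((real_of_int k - \<xi>) / \<xi>))" for k \<xi>
  have split: "S_coeffs f \<phi> k \<xi> - S_coeffs g \<psi> k \<xi> = A k \<xi> + B k \<xi>" for k \<xi>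
    by (simp add: S_coeffs_def A_def B_def D_def fourier_coeff_diff[OF f2 g2] algebra_simps)
  have "Y_sq A \<le> Z_sq \<phi> * ennreal (LINT t|lborel_01. (cmod (f t - g t))\<^sup>2)"
    unfolding A_def Z_sq_eq
    using square_integrable_diff[OF f2 g2] borel_measurable_FT_schwartz[OF \<phi>(1)] FT_minus_one_eq_0[OF \<phi>]
    by (rule Y_sq_fourier_le)
  then have "Y_sq A \<le> Z_sq \<phi> * ennreal ((L2_dist f g)\<^sup>2)"
    by (simp add: L2_dist_eq_integral[OF f g])
  moreover have "Y_sq B \<le> Z_weighted_sq D * ennreal (LINT t|lborel_01. (cmod (g t))\<^sup>2)"
    unfolding B_def by (rule Y_sq_fourier_le[OF g2]) (simp_all add: D_def FT_minus_one_eq_0 \<phi> \<psi>)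
  then have "Y_sq B \<le> ennreal ((Z_dist \<phi> \<psi>)\<^sup>2) * ennreal (LINT t|lborel_01. (cmod (g t))\<^sup>2)"
    unfolding D_def Z_weighted_sq_FT_diff[OF \<phi> \<psi>] .
  moreover have "Y_sq (\<lambda>k \<xi>. A k \<xi> + B k \<xi>) \<le> 2 * Y_sq A + 2 * Y_sq B"
    by (rule Y_sq_add_le) (simp_all add: A_def B_def)
  ultimately have "Y_sq (\<lambda>k \<xi>. S_coeffs f \<phi> k \<xi> - S_coeffs g \<psi> k \<xi>)
      \<le> 2 * (Z_sq \<phi> * ennreal ((L2_dist f g)\<^sup>2))
        + 2 * (ennreal ((Z_dist \<phi> \<psi>)\<^sup>2) * ennreal (LINT t|lborel_01. (cmod (g t))\<^sup>2))"
    unfolding split by (meson add_mono mult_left_mono order_trans zero_le)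
  also have "\<dots> = ennreal (2 * enn2real (Z_sq \<phi>) * (L2_dist f g)\<^sup>2
      + 2 * (Z_dist \<phi> \<psi>)\<^sup>2 * (LINT t|lborel_01. (cmod (g t))\<^sup>2))"
    using \<phi>(2) by (simp add: in_Z_def ennreal_mult ennreal_enn2real ennreal_plus mult.assoc)
  finally show ?thesis
    unfolding Y_dist_def by (simp add: enn2real_leI)
qed

lemma exists_delta_for_quadratic_bound:
  fixes A B \<epsilon> :: real
  assumes "0 \<le> A" "0 \<le> B" "0 < \<epsilon>"
  obtains \<delta> where "0 < \<delta>" "\<delta> \<le> 1"
    "\<And>x y D. \<bar>x\<bar> < \<delta> \<Longrightarrow> \<bar>y\<bar> < \<delta> \<Longrightarrow> D\<^sup>2 \<le> A * x\<^sup>2 + B * y\<^sup>2 \<Longrightarrow> D < \<epsilon>"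
proof
  define \<delta> where "\<delta> = min 1 (\<epsilon> / sqrt (A + B + 1))"
  have "0 < sqrt (A + B + 1)" using assms by simp
  then show "0 < \<delta>" "\<delta> \<le> 1" using assms by (auto simp: \<delta>_def)
  fix x y D :: real
  assume "\<bar>x\<bar> < \<delta>" "\<bar>y\<bar> < \<delta>" and D: "D\<^sup>2 \<le> A * x\<^sup>2 + B * y\<^sup>2"
  have "\<delta>\<^sup>2 \<le> (\<epsilon> / sqrt (A + B + 1))\<^sup>2"
    using \<open>0 < \<delta>\<close> by (intro power_mono) (auto simp: \<delta>_def)
  also have "\<dots> = \<epsilon>\<^sup>2 / (A + B + 1)" using assms by (simp add: power_divide)
  finally have \<delta>: "(A + B + 1) * \<delta>\<^sup>2 \<le> \<epsilon>\<^sup>2" using assms by (simp add: field_simps)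
  have "x\<^sup>2 \<le> \<delta>\<^sup>2" "y\<^sup>2 \<le> \<delta>\<^sup>2"
    using \<open>\<bar>x\<bar> < \<delta>\<close> \<open>\<bar>y\<bar> < \<delta>\<close> by (auto simp flip: abs_le_square_iff)
  then have "A * x\<^sup>2 + B * y\<^sup>2 \<le> (A + B) * \<delta>\<^sup>2"
    using assms by (simp add: distrib_right add_mono mult_left_mono)
  also have "\<dots> < \<epsilon>\<^sup>2" using \<delta> \<open>0 < \<delta>\<close> by (simp add: algebra_simps) (smt (verit) zero_less_power)
  finally have "D\<^sup>2 < \<epsilon>\<^sup>2" using D by linarith
  then show "D < \<epsilon>" using assms(3) by (simp add: power2_less_imp_less)
qed

lemma S_coeffs_continuous:
  assumes f: "L2_01 f" and \<phi>: "schwartz \<phi>" "in_Z \<phi>" and "0 < \<epsilon>"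
  shows "\<exists>\<delta>>0. \<forall>g \<psi>. L2_01 g \<and> schwartz \<psi> \<and> in_Z \<psi> \<and> L2_dist f g < \<delta> \<and> Z_dist \<phi> \<psi> < \<delta> \<longrightarrow>
    Y_dist (S_coeffs f \<phi>) (S_coeffs g \<psi>) < \<epsilon>"
proof -
  define N where "N = (LINT t|lborel_01. (cmod (f t))\<^sup>2)"
  have "0 \<le> N" by (simp add: N_def)
  obtain \<delta> where "0 < \<delta>" "\<delta> \<le> 1" and small:
      "\<And>x y D. \<bar>x\<bar> < \<delta> \<Longrightarrow> \<bar>y\<bar> < \<delta> \<Longrightarrow>
        D\<^sup>2 \<le> 2 * enn2real (Z_sq \<phi>) * x\<^sup>2 + (4 * N + 4) * y\<^sup>2 \<Longrightarrow> D < \<epsilon>"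
    using exists_delta_for_quadratic_bound[of "2 * enn2real (Z_sq \<phi>)" "4 * N + 4" \<epsilon>] \<open>0 \<le> N\<close> \<open>0 < \<epsilon>\<close>
    by auto
  show ?thesis
  proof (intro exI[of _ \<delta>] conjI allI impI \<open>0 < \<delta>\<close>)
    fix g \<psi> assume "L2_01 g \<and> schwartz \<psi> \<and> in_Z \<psi> \<and> L2_dist f g < \<delta> \<and> Z_dist \<phi> \<psi> < \<delta>"
    then have g: "L2_01 g" and \<psi>: "schwartz \<psi>" "in_Z \<psi>"
      and close: "L2_dist f g < \<delta>" "Z_dist \<phi> \<psi> < \<delta>" by auto
    define x where "x = L2_dist f g"
    define y where "y = Z_dist \<phi> \<psi>"
    have "0 \<le> x" by (simp add: x_def L2_dist_def)
    then have "x\<^sup>2 \<le> 1"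
      using close \<open>\<delta> \<le> 1\<close> by (intro power_le_one) (auto simp: x_def)
    \<comment> \<open>\<open>\<parallel>g\<parallel>\<^sup>2 \<le> 2N + 2\<close> once \<open>\<parallel>f - g\<parallel> \<le> 1\<close>, whence the constant \<open>4N + 4\<close>\<close>
    moreover have "(LINT t|lborel_01. (cmod (g t))\<^sup>2) \<le> 2 * N + 2 * x\<^sup>2"
      using integral_norm_sq_le[OF L2_01_imp_square_integrable[OF f] L2_01_imp_square_integrable[OF g]]
      by (simp add: N_def x_def L2_dist_eq_integral[OF f g])
    ultimately have "2 * y\<^sup>2 * (LINT t|lborel_01. (cmod (g t))\<^sup>2) \<le> 2 * y\<^sup>2 * (2 * N + 2)"
      by (intro mult_left_mono) simp_all
    then have "(Y_dist (S_coeffs f \<phi>) (S_coeffs g \<psi>))\<^sup>2 \<le> 2 * enn2real (Z_sq \<phi>) * x\<^sup>2 + (4 * N + 4) * y\<^sup>2"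
      using Y_dist_S_coeffs_le[OF f g \<phi> \<psi>] unfolding x_def y_def by (simp add: algebra_simps)
    moreover have "\<bar>x\<bar> < \<delta>" "\<bar>y\<bar> < \<delta>"
      using close by (simp_all add: x_def y_def L2_dist_def Z_dist_def)
    ultimately show "Y_dist (S_coeffs f \<phi>) (S_coeffs g \<psi>) < \<epsilon>"
      using small by blast
  qed
qed

theorem theorem4p1:
  shows "(\<forall>f \<phi>. L2_01 f \<and> schwartz \<phi> \<and> in_Z \<phi> \<longrightarrow> in_Y (S_coeffs f \<phi>)) \<and>
         (\<forall>f \<phi>. L2_01 f \<and> schwartz \<phi> \<and> in_Z \<phi> \<longrightarrow>
            (\<forall>\<epsilon>>0. \<exists>\<delta>>0. \<forall>g \<psi>. L2_01 g \<and> schwartz \<psi> \<and> in_Z \<psi> \<and>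
                L2_dist f g < \<delta> \<and> Z_dist \<phi> \<psi> < \<delta> \<longrightarrow>
                Y_dist (S_coeffs f \<phi>) (S_coeffs g \<psi>) < \<epsilon>))"
  using S_coeffs_in_Y S_coeffs_continuous by blast

end
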